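(* Let $\hat{\mathcal D}$ be a marked DAG over $X$, $\kappa>0$, $q\in\mathcal Q_{\mathcal D}$, $c\in\mathbb R_+^X$, $p=\mathcal A(q,c)$ with associated values $\hat c_v$ ($v\in V$), and $Q=\Lambda(q)$. Then $$\sum_{uv\in A}\eta_{uv}Q_{uv}\hat c_v\le\big(\Delta_0(\mathcal D)+\Delta_I(\hat{\mathcal D})\big)\sum_{x\in X}c_xQ_x.$$
   Context: Let $X$ be a finite set. A DAG over $X$ is a finite directed acyclic graph $\mathcal D=(V,A)$ with $X\subseteq V$, a single source $r$, whose set of sinks is exactly $X$. A flow is $F\in\mathbb R_+^A$ with $\sum_{v:uv\in A}F_{uv}=\sum_{v:vu\in A}F_{vu}$ for $u\in V\setminus(X\cup\{r\})$; $F_u:=\sum_{v:uv\in A}F_{uv}$ for $u\notin X$, $F_x:=\sum_{u:ux\in A}F_{ux}$ for $x\in X$; unit flows have $F_r=1$. $\mathcal P_{\mathcal D}$ is the set of directed paths from $r$ to a sink. A marked DAG is $(\mathcal D,\omega,\theta)$ with $\omega\in\mathbb R_{>0}^A$, $\omega_{uv}>\omega_{vw}$ whenever $uv,vw\in A$, and $\theta\in\mathbb R_{>0}^A$ with $\sum_{v:uv\in A}\theta_{uv}=1$ for $u\in V\setminus X$. $\theta(\gamma):=\prod_{uv\in\gamma}\theta_{uv}$; $\Delta_0(\mathcal D)$ is the maximal number of arcs of a path in $\mathcal P_{\mathcal D}$, $\Delta_I(\hat{\mathcal D}):=\max_{\gamma\in\mathcal P_{\mathcal D}}\log(1/\theta(\gamma))$.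 Put $\eta_{uv}:=1+\log(1/\theta_{uv})$, $\delta_{uv}:=\theta_{uv}/\eta_{uv}$. $\mathcal Q_{\mathcal D}:=\{p\in\mathbb R_+^A:\sum_{v:uv\in A}p_{uv}=1\ \forall u\in V\setminus X\}$; $q^{(u)}:=(q_{uv})_{v:uv\in A}$; $\mathcal Q^{(u)}$ is the probability simplex on $\{v:uv\in A\}$; $\mathbb D^{(u)}(p\|p'):=\frac1\kappa\sum_{v:uv\in A}\frac{\omega_{uv}}{\eta_{uv}}\big[(p_v+\delta_{uv})\log\frac{p_v+\delta_{uv}}{p'_v+\delta_{uv}}+p'_v-p_v\big]$. The step map $\mathcal A(q,c)$ outputs $p\in\mathcal Q_{\mathcal D}$: set $\hat c_x:=c_x$ for $x\in X$; process $u\in V\setminus X$ so that each vertex comes after all its out-neighbours, setting $p^{(u)}:=\arg\min_{p'\in\mathcal Q^{(u)}}\{\mathbb D^{(u)}(p'\|q^{(u)})+\sum_vp'_v\hat c_v\}$ and $\hat c_u:=\sum_vp^{(u)}_v\hat c_v$. $\Lambda(q)$ is the unique unit flow $F$ with $F_{uv}=F_uq_{uv}$ for all $uv\in A$. *)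

theory Defs
  imports Complex_Main
begin

definition out_nbrs :: "('v \<times> 'v) set \<Rightarrow> 'v \<Rightarrow> 'v set" where
  "out_nbrs A u = {v. (u, v) \<in> A}"

definition in_nbrs :: "('v \<times> 'v) set \<Rightarrow> 'v \<Rightarrow> 'v set" where
  "in_nbrs A u = {w. (w, u) \<in> A}"

definition is_dag :: "'v set \<Rightarrow> ('v \<times> 'v) set \<Rightarrow> 'v set \<Rightarrow> 'v \<Rightarrow> bool" where
  "is_dag V A X r \<longleftrightarrow> finite V \<and> A \<subseteq> V \<times> V \<and> X \<subseteq> V \<and> r \<in> V \<and> acyclic A
     \<and> {v \<in> V. \<forall>u. (u, v) \<notin> A} = {r}
     \<and> {v \<in> V. \<forall>w. (v, w) \<notin> A} = X"

definition marked_dag ::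
  "'v set \<Rightarrow> ('v \<times> 'v) set \<Rightarrow> 'v set \<Rightarrow> 'v \<Rightarrow> ('v \<times> 'v \<Rightarrow> real) \<Rightarrow> ('v \<times> 'v \<Rightarrow> real) \<Rightarrow> bool" where
  "marked_dag V A X r \<omega> \<theta> \<longleftrightarrow> is_dag V A X r
     \<and> (\<forall>e\<in>A. \<omega> e > 0)
     \<and> (\<forall>u v w. (u, v) \<in> A \<longrightarrow> (v, w) \<in> A \<longrightarrow> \<omega> (u, v) > \<omega> (v, w))
     \<and> (\<forall>e\<in>A. \<theta> e > 0)
     \<and> (\<forall>u\<in>V - X. (\<Sum>v\<in>out_nbrs A u. \<theta> (u, v)) = 1)"

definition flow_val :: "('v \<times> 'v) set \<Rightarrow> 'v set \<Rightarrow> ('v \<times> 'v \<Rightarrow> real) \<Rightarrow> 'v \<Rightarrow> real" where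
  "flow_val A X F u =
     (if u \<in> X then (\<Sum>w\<in>in_nbrs A u. F (w, u)) else (\<Sum>v\<in>out_nbrs A u. F (u, v)))"

definition is_flow :: "'v set \<Rightarrow> ('v \<times> 'v) set \<Rightarrow> 'v set \<Rightarrow> 'v \<Rightarrow> ('v \<times> 'v \<Rightarrow> real) \<Rightarrow> bool" where
  "is_flow V A X r F \<longleftrightarrow> (\<forall>e\<in>A. F e \<ge> 0)
     \<and> (\<forall>u\<in>V - (X \<union> {r}). (\<Sum>v\<in>out_nbrs A u. F (u, v)) = (\<Sum>w\<in>in_nbrs A u. F (w, u)))"

definition is_unit_flow :: "'v set \<Rightarrow> ('v \<times> 'v) set \<Rightarrow> 'v set \<Rightarrow> 'v \<Rightarrow> ('v \<times> 'v \<Rightarrow> real) \<Rightarrow> bool" where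
  "is_unit_flow V A X r F \<longleftrightarrow> is_flow V A X r F \<and> flow_val A X F r = 1"

definition is_Lambda :: "'v set \<Rightarrow> ('v \<times> 'v) set \<Rightarrow> 'v set \<Rightarrow> 'v \<Rightarrow> ('v \<times> 'v \<Rightarrow> real)
    \<Rightarrow> ('v \<times> 'v \<Rightarrow> real) \<Rightarrow> bool" where
  "is_Lambda V A X r q F \<longleftrightarrow> is_unit_flow V A X r F
     \<and> (\<forall>u v. (u, v) \<in> A \<longrightarrow> F (u, v) = flow_val A X F u * q (u, v))"

definition QD :: "'v set \<Rightarrow> ('v \<times> 'v) set \<Rightarrow> 'v set \<Rightarrow> ('v \<times> 'v \<Rightarrow> real) set" where
  "QD V A X = {p. (\<forall>e\<in>A. p e \<ge> 0) \<and> (\<forall>u\<in>V - X. (\<Sum>v\<in>out_nbrs A u. p (u, v)) = 1)}"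

definition rpaths :: "('v \<times> 'v) set \<Rightarrow> 'v set \<Rightarrow> 'v \<Rightarrow> 'v list set" where
  "rpaths A X r = {\<gamma>. \<gamma> \<noteq> [] \<and> hd \<gamma> = r \<and> last \<gamma> \<in> X
      \<and> (\<forall>i < length \<gamma> - 1. (\<gamma> ! i, \<gamma> ! Suc i) \<in> A)}"

definition path_theta :: "('v \<times> 'v \<Rightarrow> real) \<Rightarrow> 'v list \<Rightarrow> real" where
  "path_theta \<theta> \<gamma> = (\<Prod>i < length \<gamma> - 1. \<theta> (\<gamma> ! i, \<gamma> ! Suc i))"

definition Delta0 :: "('v \<times> 'v) set \<Rightarrow> 'v set \<Rightarrow> 'v \<Rightarrow> nat" where
  "Delta0 A X r = Max ((\<lambda>\<gamma>. length \<gamma> - 1) ` rpaths A X r)"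

definition DeltaI :: "('v \<times> 'v) set \<Rightarrow> 'v set \<Rightarrow> 'v \<Rightarrow> ('v \<times> 'v \<Rightarrow> real) \<Rightarrow> real" where
  "DeltaI A X r \<theta> = Max ((\<lambda>\<gamma>. ln (1 / path_theta \<theta> \<gamma>)) ` rpaths A X r)"

definition eta :: "('v \<times> 'v \<Rightarrow> real) \<Rightarrow> 'v \<times> 'v \<Rightarrow> real" where
  "eta \<theta> e = 1 + ln (1 / \<theta> e)"

definition delta :: "('v \<times> 'v \<Rightarrow> real) \<Rightarrow> 'v \<times> 'v \<Rightarrow> real" where
  "delta \<theta> e = \<theta> e / eta \<theta> e"

text \<open>Simplex on the out-neighbours of u (values outside out_nbrs are irrelevant).\<close>
definition simplex_at :: "('v \<times> 'v) set \<Rightarrow> 'v \<Rightarrow> ('v \<Rightarrow> real) set" where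
  "simplex_at A u = {p. (\<forall>v\<in>out_nbrs A u. p v \<ge> 0) \<and> (\<Sum>v\<in>out_nbrs A u. p v) = 1}"

definition Dloc :: "real \<Rightarrow> ('v \<times> 'v \<Rightarrow> real) \<Rightarrow> ('v \<times> 'v \<Rightarrow> real) \<Rightarrow> ('v \<times> 'v) set \<Rightarrow> 'v
    \<Rightarrow> ('v \<Rightarrow> real) \<Rightarrow> ('v \<Rightarrow> real) \<Rightarrow> real" where
  "Dloc \<kappa> \<omega> \<theta> A u p p' = (1 / \<kappa>) * (\<Sum>v\<in>out_nbrs A u.
      \<omega> (u, v) / eta \<theta> (u, v) *
      ((p v + delta \<theta> (u, v)) * ln ((p v + delta \<theta> (u, v)) / (p' v + delta \<theta> (u, v))) + p' v - p v))"

text \<open>(p, ch) is the output p = A(q,c) of the step map together with the associated values ch = c-hat: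
  ch_x = c_x on X, and for u in V - X, p^(u) is the argmin over the simplex of
  D^(u)(p' || q^(u)) + sum_v p'_v ch_v, and ch_u = sum_v p^(u)_v ch_v.
  (The processing order only ensures ch_v is available for the out-neighbours; the resulting
  values are the ones characterised here.)\<close>
definition step_map_rel :: "'v set \<Rightarrow> ('v \<times> 'v) set \<Rightarrow> 'v set \<Rightarrow> real \<Rightarrow> ('v \<times> 'v \<Rightarrow> real)
    \<Rightarrow> ('v \<times> 'v \<Rightarrow> real) \<Rightarrow> ('v \<times> 'v \<Rightarrow> real) \<Rightarrow> ('v \<Rightarrow> real)
    \<Rightarrow> ('v \<times> 'v \<Rightarrow> real) \<Rightarrow> ('v \<Rightarrow> real) \<Rightarrow> bool" where
  "step_map_rel V A X \<kappa> \<omega> \<theta> q c p ch \<longleftrightarrow>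
     (\<forall>x\<in>X. ch x = c x)
     \<and> (\<forall>u\<in>V - X.
          (\<lambda>v. p (u, v)) \<in> simplex_at A u
        \<and> (\<forall>p'\<in>simplex_at A u.
             Dloc \<kappa> \<omega> \<theta> A u (\<lambda>v. p (u, v)) (\<lambda>v. q (u, v)) + (\<Sum>v\<in>out_nbrs A u. p (u, v) * ch v)
             \<le> Dloc \<kappa> \<omega> \<theta> A u p' (\<lambda>v. q (u, v)) + (\<Sum>v\<in>out_nbrs A u. p' v * ch v))
        \<and> ch u = (\<Sum>v\<in>out_nbrs A u. p (u, v) * ch v))"

end

theory Submission
  imports Defs
begin

text \<open>Let L v be the largest eta-weight of a path from r to v. Then eta uv \<le> L v - L u on
  every arc, and on a sink L is at most Delta0 + DeltaI, since the eta-weight of a path is its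
  number of arcs plus ln (1 / theta(path)). Comparing the minimiser of the step map with q itself
  (divergence 0) shows ch u \<le> \<Sum>v. q uv ch v, i.e. ch is superharmonic for q, and ch \<ge> 0.
  Summing eta uv Q uv ch v \<le> (L v - L u) Q uv ch v over the arcs and regrouping by vertices,
  the contribution of every inner vertex u is L u (ch u inQ u - \<Sum>v. Q uv ch v) \<le> 0, because
  Q uv = Q u q uv and the inflow inQ u is at most Q u. Only the sinks remain, where ch = c.\<close>

definition arc_path :: "('v \<times> 'v) set \<Rightarrow> 'v list \<Rightarrow> bool" where
  "arc_path A \<gamma> \<longleftrightarrow> \<gamma> \<noteq> [] \<and> (\<forall>i < length \<gamma> - 1. (\<gamma> ! i, \<gamma> ! Suc i) \<in> A)"

definition path_weight :: "('v \<times> 'v \<Rightarrow> real) \<Rightarrow> 'v list \<Rightarrow> real" where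
  "path_weight h \<gamma> = (\<Sum>i < length \<gamma> - 1. h (\<gamma> ! i, \<gamma> ! Suc i))"

lemma rpaths_iff: "\<gamma> \<in> rpaths A X r \<longleftrightarrow> arc_path A \<gamma> \<and> hd \<gamma> = r \<and> last \<gamma> \<in> X"
  by (auto simp: rpaths_def arc_path_def)

lemma arc_path_nth_trancl:
  assumes "arc_path A \<gamma>" "i < j" "j < length \<gamma>"
  shows "(\<gamma> ! i, \<gamma> ! j) \<in> A\<^sup>+"
  using assms(2,3)
proof (induction j)
  case 0
  then show ?case by simp
next
  case (Suc j)
  have arc: "(\<gamma> ! j, \<gamma> ! Suc j) \<in> A"
    using assms(1) Suc.prems unfolding arc_path_def by auto
  show ?case
  proof (cases "i = j")
    case True
    then show ?thesis using arc by auto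
  next
    case False
    then have "(\<gamma> ! i, \<gamma> ! j) \<in> A\<^sup>+" using Suc by auto
    then show ?thesis using arc by (rule trancl_into_trancl)
  qed
qed

lemma distinct_arc_path:
  assumes "acyclic A" "arc_path A \<gamma>"
  shows "distinct \<gamma>"
proof -
  have "\<gamma> ! i \<noteq> \<gamma> ! j" if "i < j" "j < length \<gamma>" for i j
    using arc_path_nth_trancl[OF assms(2) that] assms(1) unfolding acyclic_def by auto
  then show ?thesis unfolding distinct_conv_nth by (metis linorder_neq_iff)
qed

lemma set_arc_path_subset:
  assumes "A \<subseteq> V \<times> V" "hd \<gamma> \<in> V" "arc_path A \<gamma>"
  shows "set \<gamma> \<subseteq> V"
proof
  fix x assume "x \<in> set \<gamma>"
  then obtain i where i: "i < length \<gamma>" "\<gamma> ! i = x" by (auto simp: in_set_conv_nth)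
  show "x \<in> V"
  proof (cases i)
    case 0
    then show ?thesis using i assms(2,3) by (simp add: arc_path_def hd_conv_nth)
  next
    case (Suc k)
    then have "(\<gamma> ! k, \<gamma> ! i) \<in> A" using assms(3) i unfolding arc_path_def by auto
    then show ?thesis using assms(1) i by auto
  qed
qed

text \<open>In an acyclic graph arc paths are distinct lists, so they have length at most the
  number of vertices.\<close>
lemma finite_arc_paths:
  assumes "finite V" "A \<subseteq> V \<times> V" "acyclic A"
  shows "finite {\<gamma>. arc_path A \<gamma> \<and> hd \<gamma> \<in> V}"
proof (rule finite_subset[OF _ finite_lists_length_le[OF assms(1), of "card V"]])
  show "{\<gamma>. arc_path A \<gamma> \<and> hd \<gamma> \<in> V} \<subseteq> {xs. set xs \<subseteq> V \<and> length xs \<le> card V}"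
  proof
    fix \<gamma> assume "\<gamma> \<in> {\<gamma>. arc_path A \<gamma> \<and> hd \<gamma> \<in> V}"
    then have \<gamma>: "arc_path A \<gamma>" "hd \<gamma> \<in> V" by auto
    have set_\<gamma>: "set \<gamma> \<subseteq> V" using set_arc_path_subset[OF assms(2) \<gamma>(2,1)] .
    have "length \<gamma> = card (set \<gamma>)"
      using distinct_arc_path[OF assms(3) \<gamma>(1)] by (simp add: distinct_card)
    also have "\<dots> \<le> card V" using set_\<gamma> assms(1) by (simp add: card_mono)
    finally show "\<gamma> \<in> {xs. set xs \<subseteq> V \<and> length xs \<le> card V}" using set_\<gamma> by simp
  qed
qed

lemma arc_path_snoc:
  assumes "arc_path A \<gamma>" "(last \<gamma>, v) \<in> A"
  shows "arc_path A (\<gamma> @ [v])"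
  unfolding arc_path_def
proof (intro conjI allI impI)
  show "\<gamma> @ [v] \<noteq> []" by simp
  fix i assume "i < length (\<gamma> @ [v]) - 1"
  then have i: "i < length \<gamma>" by simp
  show "((\<gamma> @ [v]) ! i, (\<gamma> @ [v]) ! Suc i) \<in> A"
  proof (cases "Suc i < length \<gamma>")
    case True
    then show ?thesis using assms(1) i by (simp add: arc_path_def nth_append)
  next
    case False
    then have "i = length \<gamma> - 1" "Suc i = length \<gamma>" using i by auto
    then show ?thesis using assms i by (simp add: nth_append last_conv_nth arc_path_def)
  qed
qed

lemma path_weight_snoc:
  assumes "\<gamma> \<noteq> []"
  shows "path_weight h (\<gamma> @ [v]) = path_weight h \<gamma> + h (last \<gamma>, v)"
proof -
  let ?n = "length \<gamma> - 1"
  have len: "length (\<gamma> @ [v]) - 1 = Suc ?n" using assms by simp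
  have "path_weight h (\<gamma> @ [v])
      = (\<Sum>i < ?n. h ((\<gamma> @ [v]) ! i, (\<gamma> @ [v]) ! Suc i)) + h ((\<gamma> @ [v]) ! ?n, (\<gamma> @ [v]) ! Suc ?n)"
    unfolding path_weight_def len by simp
  also have "(\<Sum>i < ?n. h ((\<gamma> @ [v]) ! i, (\<gamma> @ [v]) ! Suc i)) = path_weight h \<gamma>"
    unfolding path_weight_def by (rule sum.cong) (auto simp: nth_append)
  also have "(\<gamma> @ [v]) ! ?n = last \<gamma>" using assms by (simp add: nth_append last_conv_nth)
  also have "(\<gamma> @ [v]) ! Suc ?n = v" using assms by (simp add: nth_append)
  finally show ?thesis .
qed

lemma path_weight_nonneg:
  assumes "\<forall>e\<in>A. h e \<ge> 0" "arc_path A \<gamma>"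
  shows "path_weight h \<gamma> \<ge> 0"
  using assms unfolding path_weight_def arc_path_def by (auto intro: sum_nonneg)

lemma path_weight_eta:
  assumes "\<forall>e\<in>A. \<theta> e > 0" "arc_path A \<gamma>"
  shows "path_weight (eta \<theta>) \<gamma> = real (length \<gamma> - 1) + ln (1 / path_theta \<theta> \<gamma>)"
proof -
  let ?\<theta>i = "\<lambda>i. \<theta> (\<gamma> ! i, \<gamma> ! Suc i)"
  have pos: "?\<theta>i i > 0" if "i < length \<gamma> - 1" for i
    using assms that unfolding arc_path_def by auto
  have "path_weight (eta \<theta>) \<gamma> = (\<Sum>i < length \<gamma> - 1. 1 - ln (?\<theta>i i))"
    unfolding path_weight_def eta_def using pos by (intro sum.cong) (auto simp: ln_div)
  also have "\<dots> = real (length \<gamma> - 1) - (\<Sum>i < length \<gamma> - 1. ln (?\<theta>i i))"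
    by (simp add: sum_subtractf)
  also have "(\<Sum>i < length \<gamma> - 1. ln (?\<theta>i i)) = ln (path_theta \<theta> \<gamma>)"
    unfolding path_theta_def using pos by (subst ln_prod) force+
  also have "real (length \<gamma> - 1) - ln (path_theta \<theta> \<gamma>)
      = real (length \<gamma> - 1) + ln (1 / path_theta \<theta> \<gamma>)"
  proof -
    have "path_theta \<theta> \<gamma> > 0" unfolding path_theta_def using pos by (intro prod_pos) auto
    then show ?thesis by (simp add: ln_div)
  qed
  finally show ?thesis .
qed

lemma sum_arcs_eq_sum_out_nbrs:
  assumes "finite V" "A \<subseteq> V \<times> V"
  shows "(\<Sum>e\<in>A. g e) = (\<Sum>u\<in>V. \<Sum>v\<in>out_nbrs A u. g (u, v))"
proof -
  have fin_out: "finite (out_nbrs A u)" for u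
    using assms by (auto simp: out_nbrs_def intro: finite_subset[of _ V])
  have "A = Sigma V (out_nbrs A)" using assms(2) by (auto simp: out_nbrs_def)
  then have "(\<Sum>e\<in>A. g e) = (\<Sum>e\<in>Sigma V (out_nbrs A). g e)" by (rule arg_cong)
  also have "\<dots> = (\<Sum>u\<in>V. \<Sum>v\<in>out_nbrs A u. g (u, v))"
    using assms(1) fin_out by (simp add: sum.Sigma)
  finally show ?thesis .
qed

lemma sum_arcs_eq_sum_in_nbrs:
  assumes "finite V" "A \<subseteq> V \<times> V"
  shows "(\<Sum>e\<in>A. g e) = (\<Sum>v\<in>V. \<Sum>u\<in>in_nbrs A v. g (u, v))"
proof -
  have "\<And>u. out_nbrs A u = {v. v \<in> V \<and> (u, v) \<in> A}" "\<And>v. in_nbrs A v = {u. u \<in> V \<and> (u, v) \<in> A}"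
    using assms(2) by (auto simp: out_nbrs_def in_nbrs_def)
  then show ?thesis
    unfolding sum_arcs_eq_sum_out_nbrs[OF assms]
    by (simp only:) (rule sum.swap_restrict[OF assms(1) assms(1)])
qed

lemma sum_arcs_potential_diff:
  fixes L :: "'v \<Rightarrow> 'a::comm_ring"
  assumes "finite V" "A \<subseteq> V \<times> V"
  shows "(\<Sum>e\<in>A. (L (snd e) - L (fst e)) * f e)
       = (\<Sum>v\<in>V. L v * (\<Sum>u\<in>in_nbrs A v. f (u, v))) - (\<Sum>u\<in>V. L u * (\<Sum>v\<in>out_nbrs A u. f (u, v)))"
  by (simp add: left_diff_distrib sum_subtractf sum_distrib_left
      sum_arcs_eq_sum_in_nbrs[OF assms, of "\<lambda>e. L (snd e) * f e"]
      sum_arcs_eq_sum_out_nbrs[OF assms, of "\<lambda>e. L (fst e) * f e"])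

lemma entropy_term_nonneg:
  assumes "(a::real) > 0" "b > 0"
  shows "a * ln (a / b) + b - a \<ge> 0"
proof -
  have "a * (ln b - ln a) \<le> a * (b / a - 1)"
    using assms ln_le_minus_one[of "b / a"] by (intro mult_left_mono) (auto simp: ln_div)
  also have "\<dots> = b - a" using assms by (simp add: field_simps)
  finally show ?thesis using assms by (simp add: ln_div algebra_simps)
qed

lemma flow_val_nonneg: "is_flow V A X r F \<Longrightarrow> flow_val A X F u \<ge> 0"
  unfolding is_flow_def flow_val_def by (auto simp: out_nbrs_def in_nbrs_def intro: sum_nonneg)

lemma Dloc_self: "Dloc \<kappa> \<omega> \<theta> A u p p = 0"
proof -
  have "ln (if b then 0 else 1 :: real) = 0" for b by simp
  then show ?thesis by (simp add: Dloc_def)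
qed

lemma Dloc_nonneg:
  assumes "\<kappa> > 0"
    and "\<forall>v\<in>out_nbrs A u. \<omega> (u, v) \<ge> 0 \<and> eta \<theta> (u, v) > 0 \<and> delta \<theta> (u, v) > 0"
    and "\<forall>v\<in>out_nbrs A u. p v \<ge> 0 \<and> p' v \<ge> 0"
  shows "Dloc \<kappa> \<omega> \<theta> A u p p' \<ge> 0"
  unfolding Dloc_def
proof (intro mult_nonneg_nonneg sum_nonneg)
  show "0 \<le> 1 / \<kappa>" using assms(1) by simp
  fix v assume v: "v \<in> out_nbrs A u"
  show "0 \<le> \<omega> (u, v) / eta \<theta> (u, v)" using assms(2) v by (auto intro: divide_nonneg_pos)
  have "p v + delta \<theta> (u, v) > 0" "p' v + delta \<theta> (u, v) > 0"
    using assms(2,3) v by (auto simp: add_nonneg_pos)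
  from entropy_term_nonneg[OF this]
  show "0 \<le> (p v + delta \<theta> (u, v)) * ln ((p v + delta \<theta> (u, v)) / (p' v + delta \<theta> (u, v)))
            + p' v - p v"
    by linarith
qed

locale dag_over =
  fixes V :: "'v set" and A :: "('v \<times> 'v) set" and X :: "'v set" and r :: 'v
  assumes is_dag: "is_dag V A X r"
begin

lemma finite_V: "finite V" and arcs_subset: "A \<subseteq> V \<times> V" and X_subset: "X \<subseteq> V"
  and root_in_V: "r \<in> V" and acyclic_arcs: "acyclic A"
  and sources: "{v \<in> V. \<forall>u. (u, v) \<notin> A} = {r}" and sinks: "{v \<in> V. \<forall>w. (v, w) \<notin> A} = X"
  using is_dag unfolding is_dag_def by auto

lemma finite_arcs: "finite A"
  using finite_V arcs_subset by (meson finite_SigmaI finite_subset)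

lemma finite_out_nbrs: "finite (out_nbrs A u)"
  using finite_V arcs_subset by (auto simp: out_nbrs_def intro: finite_subset[of _ V])

lemma out_nbrs_sink: "x \<in> X \<Longrightarrow> out_nbrs A x = {}"
  using sinks by (auto simp: out_nbrs_def)

lemma arc_tail: "(u, v) \<in> A \<Longrightarrow> u \<in> V - X"
  using sinks arcs_subset by blast

lemma in_nbrs_root: "in_nbrs A r = {}"
  using sources by (auto simp: in_nbrs_def)

definition root_paths :: "'v \<Rightarrow> 'v list set" where
  "root_paths v = {\<gamma>. arc_path A \<gamma> \<and> hd \<gamma> = r \<and> last \<gamma> = v}"

lemma finite_root_paths: "finite (root_paths v)"
  by (rule finite_subset[OF _ finite_arc_paths[OF finite_V arcs_subset acyclic_arcs]])
     (use root_in_V in \<open>auto simp: root_paths_def\<close>)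

lemma finite_rpaths: "finite (rpaths A X r)"
  by (rule finite_subset[OF _ finite_arc_paths[OF finite_V arcs_subset acyclic_arcs]])
     (use root_in_V in \<open>auto simp: rpaths_iff\<close>)

lemma root_paths_nonempty: "v \<in> V \<Longrightarrow> root_paths v \<noteq> {}"
proof (induction v rule: wf_induct[OF finite_acyclic_wf[OF finite_arcs acyclic_arcs]])
  case (1 v)
  show ?case
  proof (cases "v = r")
    case True
    then have "[r] \<in> root_paths v" by (simp add: root_paths_def arc_path_def)
    then show ?thesis by auto
  next
    case False
    then obtain u where uv: "(u, v) \<in> A" using sources "1.prems" by auto
    then obtain \<gamma> where "\<gamma> \<in> root_paths u" using 1 arcs_subset by blast
    then have "\<gamma> @ [v] \<in> root_paths v"
      using uv arc_path_snoc[of A \<gamma> v] by (auto simp: root_paths_def arc_path_def hd_append)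
    then show ?thesis by auto
  qed
qed

definition longest_path_weight :: "('v \<times> 'v \<Rightarrow> real) \<Rightarrow> 'v \<Rightarrow> real" where
  "longest_path_weight h v = Max (path_weight h ` root_paths v)"

lemma longest_path_weight_ge: "\<gamma> \<in> root_paths v \<Longrightarrow> path_weight h \<gamma> \<le> longest_path_weight h v"
  unfolding longest_path_weight_def using finite_root_paths by (auto intro: Max_ge)

lemma longest_path_weight_attained:
  assumes "v \<in> V"
  obtains \<gamma> where "\<gamma> \<in> root_paths v" "longest_path_weight h v = path_weight h \<gamma>"
proof -
  have "longest_path_weight h v \<in> path_weight h ` root_paths v"
    unfolding longest_path_weight_def
    using finite_root_paths root_paths_nonempty[OF assms] by (intro Max_in) auto
  then show ?thesis using that by blast
qed

lemma longest_path_weight_nonneg: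
  "\<forall>e\<in>A. h e \<ge> 0 \<Longrightarrow> v \<in> V \<Longrightarrow> longest_path_weight h v \<ge> 0"
  by (metis longest_path_weight_attained path_weight_nonneg root_paths_def mem_Collect_eq)

lemma longest_path_weight_arc:
  assumes "(u, v) \<in> A"
  shows "longest_path_weight h u + h (u, v) \<le> longest_path_weight h v"
proof -
  obtain \<gamma> where \<gamma>: "\<gamma> \<in> root_paths u" "longest_path_weight h u = path_weight h \<gamma>"
    using longest_path_weight_attained assms arcs_subset by blast
  then have "\<gamma> \<noteq> []" "last \<gamma> = u" by (auto simp: root_paths_def arc_path_def)
  then have "path_weight h (\<gamma> @ [v]) = longest_path_weight h u + h (u, v)"
    using \<gamma>(2) path_weight_snoc[of \<gamma> h v] by simp
  moreover have "\<gamma> @ [v] \<in> root_paths v"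
    using \<gamma> assms arc_path_snoc[of A \<gamma> v] by (auto simp: root_paths_def arc_path_def hd_append)
  ultimately show ?thesis using longest_path_weight_ge by metis
qed

lemma flow_inflow_le_outflow:
  assumes "is_flow V A X r F" "u \<in> V - X"
  shows "(\<Sum>w\<in>in_nbrs A u. F (w, u)) \<le> flow_val A X F u"
proof (cases "u = r")
  case True
  then show ?thesis using flow_val_nonneg[OF assms(1)] in_nbrs_root by simp
next
  case False
  then have "(\<Sum>v\<in>out_nbrs A u. F (u, v)) = (\<Sum>w\<in>in_nbrs A u. F (w, u))"
    using assms unfolding is_flow_def by blast
  then show ?thesis using assms(2) by (simp add: flow_val_def)
qed

text \<open>Bounding g by the increase of L along each arc, the sum telescopes into the net
  throughput of L w at every vertex; at inner vertices this is nonpositive because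
  the inflow of Q is at most its outflow and w u is at most its q-average.\<close>
lemma flow_potential_bound:
  assumes Q: "is_Lambda V A X r q Q"
    and L_arc: "\<And>u v. (u, v) \<in> A \<Longrightarrow> L u + g (u, v) \<le> L v"
    and L_nonneg: "\<And>v. v \<in> V \<Longrightarrow> L v \<ge> 0"
    and w_nonneg: "\<And>v. v \<in> V \<Longrightarrow> w v \<ge> 0"
    and w_superharmonic: "\<And>u. u \<in> V - X \<Longrightarrow> w u \<le> (\<Sum>v\<in>out_nbrs A u. q (u, v) * w v)"
  shows "(\<Sum>e\<in>A. g e * Q e * w (snd e)) \<le> (\<Sum>x\<in>X. L x * w x * flow_val A X Q x)"
proof -
  have Lambda_flow: "is_flow V A X r Q"
    using Q unfolding is_Lambda_def is_unit_flow_def by blast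
  have Q_nonneg: "\<And>e. e \<in> A \<Longrightarrow> Q e \<ge> 0"
    and Q_prod: "\<And>u v. (u, v) \<in> A \<Longrightarrow> Q (u, v) = flow_val A X Q u * q (u, v)"
    using Q unfolding is_Lambda_def is_unit_flow_def is_flow_def by auto
  define f where "f e = Q e * w (snd e)" for e
  define inQ where "inQ v = (\<Sum>u\<in>in_nbrs A v. Q (u, v))" for v
  define net where "net u = L u * ((\<Sum>v\<in>in_nbrs A u. f (v, u)) - (\<Sum>v\<in>out_nbrs A u. f (u, v)))" for u
  have "(\<Sum>e\<in>A. g e * f e) \<le> (\<Sum>e\<in>A. (L (snd e) - L (fst e)) * f e)"
  proof (rule sum_mono)
    fix e assume e: "e \<in> A"
    then have "f e \<ge> 0" using Q_nonneg w_nonneg arcs_subset by (auto simp: f_def)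
    moreover have "g e \<le> L (snd e) - L (fst e)" using L_arc[of "fst e" "snd e"] e by auto
    ultimately show "g e * f e \<le> (L (snd e) - L (fst e)) * f e" by (rule mult_right_mono[rotated])
  qed
  also have "\<dots> = (\<Sum>u\<in>V. net u)"
    by (simp add: sum_arcs_potential_diff[OF finite_V arcs_subset] net_def
        right_diff_distrib sum_subtractf)
  also have "\<dots> = (\<Sum>x\<in>X. net x) + (\<Sum>u\<in>V - X. net u)"
    using sum.subset_diff[OF X_subset finite_V, of net] by linarith
  also have "(\<Sum>u\<in>V - X. net u) \<le> 0"
  proof (rule sum_nonpos)
    fix u assume u: "u \<in> V - X"
    have out_f: "(\<Sum>v\<in>out_nbrs A u. f (u, v)) = flow_val A X Q u * (\<Sum>v\<in>out_nbrs A u. q (u, v) * w v)"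
      by (simp add: f_def sum_distrib_left Q_prod out_nbrs_def mult.assoc)
    have "flow_val A X Q u \<ge> 0" "inQ u \<ge> 0"
      using flow_val_nonneg[OF Lambda_flow] Q_nonneg
      by (auto simp: in_nbrs_def inQ_def intro: sum_nonneg)
    then have "(\<Sum>v\<in>in_nbrs A u. f (v, u)) \<le> (\<Sum>v\<in>out_nbrs A u. f (u, v))"
      using flow_inflow_le_outflow[OF Lambda_flow u] w_nonneg[of u] w_superharmonic[OF u] u
      unfolding out_f by (simp add: f_def inQ_def sum_distrib_right[symmetric] mult_mono')
    then show "net u \<le> 0" using L_nonneg[of u] u by (simp add: net_def mult_nonneg_nonpos)
  qed
  also have "(\<Sum>x\<in>X. net x) = (\<Sum>x\<in>X. L x * w x * flow_val A X Q x)"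
    by (intro sum.cong) (auto simp: net_def out_nbrs_sink flow_val_def f_def sum_distrib_left mult_ac)
  finally show ?thesis by (simp add: f_def mult.assoc)
qed

lemma step_map_value_nonneg:
  assumes "step_map_rel V A X \<kappa> \<omega> \<theta> q c p ch" "\<forall>x\<in>X. c x \<ge> 0" "v \<in> V"
  shows "ch v \<ge> 0"
  using assms(3)
proof (induction v rule: wf_induct[OF finite_acyclic_wf_converse[OF finite_arcs acyclic_arcs]])
  case (1 u)
  show ?case
  proof (cases "u \<in> X")
    case True
    then show ?thesis using assms(1,2) by (simp add: step_map_rel_def)
  next
    case False
    then have "ch u = (\<Sum>v\<in>out_nbrs A u. p (u, v) * ch v)"
      and "\<forall>v\<in>out_nbrs A u. p (u, v) \<ge> 0"
      using assms(1) "1.prems" by (auto simp: step_map_rel_def simplex_at_def)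
    moreover have "\<forall>v\<in>out_nbrs A u. ch v \<ge> 0"
      using 1 arcs_subset by (auto simp: out_nbrs_def)
    ultimately show ?thesis by (simp add: sum_nonneg)
  qed
qed

end

locale marked_dag_over = dag_over V A X r for V :: "'v set" and A X r +
  fixes \<omega> \<theta> :: "'v \<times> 'v \<Rightarrow> real"
  assumes omega_pos: "\<forall>e\<in>A. \<omega> e > 0"
    and theta_pos: "\<forall>e\<in>A. \<theta> e > 0"
    and theta_sum: "\<forall>u\<in>V - X. (\<Sum>v\<in>out_nbrs A u. \<theta> (u, v)) = 1"
begin

lemma theta_le_one:
  assumes "(u, v) \<in> A"
  shows "\<theta> (u, v) \<le> 1"
proof -
  have "\<theta> (u, v) \<le> (\<Sum>w\<in>out_nbrs A u. \<theta> (u, w))"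
    using assms theta_pos finite_out_nbrs[of u]
    by (intro member_le_sum) (auto simp: out_nbrs_def less_imp_le)
  also have "\<dots> = 1" using theta_sum arc_tail[OF assms] by auto
  finally show ?thesis .
qed

lemma eta_ge_one: "e \<in> A \<Longrightarrow> eta \<theta> e \<ge> 1"
  using theta_pos theta_le_one[of "fst e" "snd e"] by (auto simp: eta_def)

lemma delta_pos: "e \<in> A \<Longrightarrow> delta \<theta> e > 0"
  using theta_pos eta_ge_one[of e] by (auto simp: delta_def)

lemma step_map_value_le_expectation:
  assumes "\<kappa> > 0" "q \<in> QD V A X" "step_map_rel V A X \<kappa> \<omega> \<theta> q c p ch" "u \<in> V - X"
  shows "ch u \<le> (\<Sum>v\<in>out_nbrs A u. q (u, v) * ch v)"
proof -
  have q_simplex: "(\<lambda>v. q (u, v)) \<in> simplex_at A u"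
    using assms(2,4) by (auto simp: QD_def simplex_at_def out_nbrs_def)
  have p_simplex: "(\<lambda>v. p (u, v)) \<in> simplex_at A u"
    using assms(3,4) by (simp add: step_map_rel_def)
  have "Dloc \<kappa> \<omega> \<theta> A u (\<lambda>v. p (u, v)) (\<lambda>v. q (u, v)) \<ge> 0"
    using q_simplex p_simplex omega_pos eta_ge_one delta_pos
    by (intro Dloc_nonneg[OF assms(1)]) (force simp: simplex_at_def out_nbrs_def)+
  moreover have "ch u = (\<Sum>v\<in>out_nbrs A u. p (u, v) * ch v)"
    and "Dloc \<kappa> \<omega> \<theta> A u (\<lambda>v. p (u, v)) (\<lambda>v. q (u, v)) + (\<Sum>v\<in>out_nbrs A u. p (u, v) * ch v)
         \<le> Dloc \<kappa> \<omega> \<theta> A u (\<lambda>v. q (u, v)) (\<lambda>v. q (u, v)) + (\<Sum>v\<in>out_nbrs A u. q (u, v) * ch v)"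
    using assms(3,4) q_simplex unfolding step_map_rel_def by blast+
  ultimately show ?thesis by (simp add: Dloc_self)
qed

lemma longest_eta_path_at_sink:
  assumes "x \<in> X"
  shows "longest_path_weight (eta \<theta>) x \<le> real (Delta0 A X r) + DeltaI A X r \<theta>"
proof -
  obtain \<gamma> where \<gamma>: "\<gamma> \<in> root_paths x" "longest_path_weight (eta \<theta>) x = path_weight (eta \<theta>) \<gamma>"
    using longest_path_weight_attained assms X_subset by blast
  then have \<gamma>_rpath: "\<gamma> \<in> rpaths A X r" and \<gamma>_arc: "arc_path A \<gamma>"
    using assms by (auto simp: root_paths_def rpaths_iff)
  have "length \<gamma> - 1 \<le> Delta0 A X r"
    unfolding Delta0_def using finite_rpaths \<gamma>_rpath by (auto intro: Max_ge)
  moreover have "ln (1 / path_theta \<theta> \<gamma>) \<le> DeltaI A X r \<theta>"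
    unfolding DeltaI_def using finite_rpaths \<gamma>_rpath by (auto intro: Max_ge)
  ultimately show ?thesis
    using \<gamma>(2) path_weight_eta[OF theta_pos \<gamma>_arc] by linarith
qed

end

lemma marked_dag_over_if_marked_dag:
  "marked_dag V A X r \<omega> \<theta> \<Longrightarrow> marked_dag_over V A X r \<omega> \<theta>"
  unfolding marked_dag_def marked_dag_over_def marked_dag_over_axioms_def dag_over_def by auto

theorem lemma4p11:
  fixes V X :: "'v set" and A :: "('v \<times> 'v) set" and r :: 'v
    and \<omega> \<theta> q p Q :: "'v \<times> 'v \<Rightarrow> real" and c ch :: "'v \<Rightarrow> real" and \<kappa> :: real
  assumes "marked_dag V A X r \<omega> \<theta>"
    and "\<kappa> > 0"
    and "q \<in> QD V A X"
    and "\<forall>x\<in>X. c x \<ge> 0"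
    and "step_map_rel V A X \<kappa> \<omega> \<theta> q c p ch"
    and "is_Lambda V A X r q Q"
  shows "(\<Sum>e\<in>A. eta \<theta> e * Q e * ch (snd e))
         \<le> (real (Delta0 A X r) + DeltaI A X r \<theta>) * (\<Sum>x\<in>X. c x * flow_val A X Q x)"
proof -
  interpret marked_dag_over V A X r \<omega> \<theta>
    using assms(1) by (rule marked_dag_over_if_marked_dag)
  let ?L = "longest_path_weight (eta \<theta>)"
  have "(\<Sum>e\<in>A. eta \<theta> e * Q e * ch (snd e)) \<le> (\<Sum>x\<in>X. ?L x * ch x * flow_val A X Q x)"
    using assms eta_ge_one
    by (intro flow_potential_bound longest_path_weight_arc longest_path_weight_nonneg
        step_map_value_nonneg step_map_value_le_expectation) force+
  also have "\<dots> \<le> (\<Sum>x\<in>X. (real (Delta0 A X r) + DeltaI A X r \<theta>) * (c x * flow_val A X Q x))"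
  proof (rule sum_mono)
    fix x assume x: "x \<in> X"
    have "flow_val A X Q x \<ge> 0"
      using assms(6) unfolding is_Lambda_def is_unit_flow_def by (blast intro: flow_val_nonneg)
    then show "?L x * ch x * flow_val A X Q x
               \<le> (real (Delta0 A X r) + DeltaI A X r \<theta>) * (c x * flow_val A X Q x)"
      using longest_eta_path_at_sink[OF x] assms(4,5) x
      by (simp add: step_map_rel_def mult.assoc mult_right_mono)
  qed
  finally show ?thesis by (simp add: sum_distrib_left)
qed

end
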